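(* Let $(\mathbf H\oplus\mathbf V,\bullet)$ be the Lie group with product $(h,v)\bullet(h',v')=(h+h',\ \rho(h)v'+v)$, where $\rho:\mathbf H\to GL(\mathbf V)$ is a representation of the additive group $\mathbf H$. Let $\pi$ be a multiplicative Poisson bivector field on this group (i.e. a Poisson–Lie structure), and let $\pi^{ij}(h,v)$ denote its components with respect to linear coordinates $(h^k)$ on $\mathbf H$ and $(v^l)$ on $\mathbf V$. Then for every $k$, the bivector field with components $\partial\pi^{ij}/\partial h^k$ is left-invariant, and for every $l$, the bivector field with components $\partial\pi^{ij}/\partial v^l$ is right-invariant on the group.
   Context: $\mathbf H,\mathbf V$ are finite-dimensional real vector spaces, $\mathbf H$ regarded as a commutative group under addition. In these linear coordinates, for every $h'\in\mathbf H$ the constant vector field $(h',0)$ is left-invariant, and for every $v'\in\mathbf V$ the constant vector field $(0,v')$ is right-invariant. *)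

theory Defs
  imports "HOL-Analysis.Analysis"
begin

definition pd :: "'a::euclidean_space \<Rightarrow> ('a \<Rightarrow> real) \<Rightarrow> 'a \<Rightarrow> real" where
  "pd b f x = frechet_derivative f (at x) b"

fun Ck :: "nat \<Rightarrow> ('a::euclidean_space \<Rightarrow> real) \<Rightarrow> bool" where
  "Ck 0 f = continuous_on UNIV f"
| "Ck (Suc n) f = ((\<forall>x. f differentiable (at x)) \<and> (\<forall>b\<in>Basis. Ck n (pd b f)))"

definition smooth :: "('a::euclidean_space \<Rightarrow> real) \<Rightarrow> bool" where
  "smooth f \<longleftrightarrow> (\<forall>n. Ck n f)"

text \<open>Coordinates on H \<oplus> V are indexed by 'm + 'n: Inl k is h^k, Inr l is v^l.\<close>

fun cvec :: "('m::finite + 'n::finite) \<Rightarrow> (real^'m) \<times> (real^'n)" where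
  "cvec (Inl k) = (axis k 1, 0)"
| "cvec (Inr l) = (0, axis l 1)"

fun coord :: "('m::finite + 'n::finite) \<Rightarrow> (real^'m) \<times> (real^'n) \<Rightarrow> real" where
  "coord (Inl k) p = fst p $ k"
| "coord (Inr l) p = snd p $ l"

definition pdc :: "('m::finite + 'n::finite) \<Rightarrow> ((real^'m) \<times> (real^'n) \<Rightarrow> real)
    \<Rightarrow> (real^'m) \<times> (real^'n) \<Rightarrow> real" where
  "pdc a f x = pd (cvec a) f x"

definition gmult :: "(real^'m::finite \<Rightarrow> real^'n::finite^'n) \<Rightarrow> (real^'m) \<times> (real^'n)
    \<Rightarrow> (real^'m) \<times> (real^'n) \<Rightarrow> (real^'m) \<times> (real^'n)" where
  "gmult \<rho> g g' = (fst g + fst g', \<rho> (fst g) *v snd g' + snd g)"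

definition smooth_rep :: "(real^'m::finite \<Rightarrow> real^'n::finite^'n) \<Rightarrow> bool" where
  "smooth_rep \<rho> \<longleftrightarrow> \<rho> 0 = mat 1 \<and> (\<forall>h h'. \<rho> (h + h') = \<rho> h ** \<rho> h')
      \<and> (\<forall>i j. smooth (\<lambda>h. \<rho> h $ i $ j))"

type_synonym ('m,'n) bivf = "(real^'m) \<times> (real^'n) \<Rightarrow> ('m + 'n) \<Rightarrow> ('m + 'n) \<Rightarrow> real"

definition bivector_field :: "('m::finite,'n::finite) bivf \<Rightarrow> bool" where
  "bivector_field P \<longleftrightarrow> (\<forall>x i j. P x i j = - P x j i) \<and> (\<forall>i j. smooth (\<lambda>x. P x i j))"

definition jac :: "((real^'m::finite) \<times> (real^'n::finite) \<Rightarrow> (real^'m) \<times> (real^'n))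
    \<Rightarrow> (real^'m) \<times> (real^'n) \<Rightarrow> ('m + 'n) \<Rightarrow> ('m + 'n) \<Rightarrow> real" where
  "jac F x a b = pdc b (\<lambda>y. coord a (F y)) x"

definition push :: "((real^'m::finite) \<times> (real^'n::finite) \<Rightarrow> (real^'m) \<times> (real^'n))
    \<Rightarrow> (real^'m) \<times> (real^'n) \<Rightarrow> (('m + 'n) \<Rightarrow> ('m + 'n) \<Rightarrow> real)
    \<Rightarrow> ('m + 'n) \<Rightarrow> ('m + 'n) \<Rightarrow> real" where
  "push F x P a b = (\<Sum>i\<in>UNIV. \<Sum>j\<in>UNIV. jac F x a i * P i j * jac F x b j)"

definition poisson :: "('m::finite,'n::finite) bivf \<Rightarrow> bool" where
  "poisson P \<longleftrightarrow> bivector_field P \<and>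
     (\<forall>x i j k. (\<Sum>l\<in>UNIV. P x i l * pdc l (\<lambda>y. P y j k) x
                          + P x j l * pdc l (\<lambda>y. P y k i) x
                          + P x k l * pdc l (\<lambda>y. P y i j) x) = 0)"

definition multiplicative :: "(real^'m::finite \<Rightarrow> real^'n::finite^'n) \<Rightarrow> ('m,'n) bivf \<Rightarrow> bool" where
  "multiplicative \<rho> P \<longleftrightarrow> (\<forall>g g' a b. P (gmult \<rho> g g') a b =
       push (gmult \<rho> g) g' (P g') a b + push (\<lambda>y. gmult \<rho> y g') g (P g) a b)"

definition left_invariant :: "(real^'m::finite \<Rightarrow> real^'n::finite^'n) \<Rightarrow> ('m,'n) bivf \<Rightarrow> bool" where
  "left_invariant \<rho> X \<longleftrightarrow> (\<forall>g g' a b. X (gmult \<rho> g g') a b = push (gmult \<rho> g) g' (X g') a b)"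

definition right_invariant :: "(real^'m::finite \<Rightarrow> real^'n::finite^'n) \<Rightarrow> ('m,'n) bivf \<Rightarrow> bool" where
  "right_invariant \<rho> X \<longleftrightarrow> (\<forall>g g' a b. X (gmult \<rho> g g') a b = push (\<lambda>y. gmult \<rho> y g') g (X g) a b)"

end

theory Submission
  imports Defs
begin

text \<open>
  Left translations commute with translations along \<open>H\<close>, and right translations commute with
  translations along \<open>V\<close>. Translating the argument \<open>g'\<close> of the multiplicativity identity
  \<open>\<pi>(g \<bullet> g') = (L\<^sub>g)\<^sub>* \<pi>(g') + (R\<^sub>g\<^sub>')\<^sub>* \<pi>(g)\<close> by \<open>t e\<^sub>k\<close> with \<open>e\<^sub>k \<in> H\<close> therefore translates \<open>g \<bullet> g'\<close> by \<open>t e\<^sub>k\<close>,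
  leaves both Jacobians unchanged and leaves the second summand constant. Differentiating in \<open>t\<close>
  at \<open>0\<close> gives \<open>\<partial>\<^sub>k \<pi>(g \<bullet> g') = (L\<^sub>g)\<^sub>* \<partial>\<^sub>k \<pi>(g')\<close>. Symmetrically, translating \<open>g\<close> along \<open>V\<close> gives
  right invariance of \<open>\<partial>\<pi>/\<partial>v\<^sup>l\<close>.
\<close>

lemma has_derivative_add_const_iff:
  "((\<lambda>y. F y + c) has_derivative F') net \<longleftrightarrow> (F has_derivative F') net"
proof
  assume "((\<lambda>y. F y + c) has_derivative F') net"
  then show "(F has_derivative F') net"
    using has_derivative_add_const[of "\<lambda>y. F y + c" F' net "- c"] by simp
qed (rule has_derivative_add_const)

lemma frechet_derivative_add_const:
  "frechet_derivative (\<lambda>y. F y + c) net = frechet_derivative F net"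
  unfolding frechet_derivative_def has_derivative_add_const_iff ..

lemma has_derivative_translate:
  fixes F :: "'a::real_normed_vector \<Rightarrow> 'b::real_normed_vector"
  assumes "(F has_derivative F') (at (x + d))"
  shows "((\<lambda>y. F (y + d)) has_derivative F') (at x)"
proof -
  have "((\<lambda>y. y + d) has_derivative (\<lambda>y. y)) (at x)"
    by (auto intro!: derivative_eq_intros)
  from has_derivative_compose[OF this assms] show ?thesis .
qed

lemma frechet_derivative_translate:
  fixes F :: "'a::real_normed_vector \<Rightarrow> 'b::real_normed_vector"
  assumes "\<And>y. F (y + d) = F y + c"
  shows "frechet_derivative F (at (x + d)) = frechet_derivative F (at x)"
proof -
  have "(F has_derivative F') (at (x + d)) \<longleftrightarrow> (F has_derivative F') (at x)" for F'
  proof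
    assume "(F has_derivative F') (at (x + d))"
    then have "((\<lambda>y. F (y + d)) has_derivative F') (at x)"
      by (rule has_derivative_translate)
    then have "((\<lambda>y. F y + c) has_derivative F') (at x)"
      by (simp only: assms)
    then show "(F has_derivative F') (at x)"
      by (simp only: has_derivative_add_const_iff)
  next
    assume "(F has_derivative F') (at x)"
    then have "((\<lambda>y. F (y + d)) has_derivative F') (at (x + d + - d))"
      using has_derivative_add_const[of F F' "at x" c] by (simp add: assms)
    then have "((\<lambda>y. F (y + - d + d)) has_derivative F') (at (x + d))"
      by (rule has_derivative_translate)
    then show "(F has_derivative F') (at (x + d))"
      by simp
  qed
  then show ?thesis
    unfolding frechet_derivative_def by simp
qed

lemma pd_has_real_derivative:
  fixes f :: "'a::euclidean_space \<Rightarrow> real"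
  assumes "f differentiable (at x)"
  shows "((\<lambda>t. f (x + t *\<^sub>R b)) has_real_derivative pd b f x) (at 0)"
proof -
  have line: "((\<lambda>t::real. x + t *\<^sub>R b) has_derivative (\<lambda>t. t *\<^sub>R b)) (at 0)"
    by (auto intro!: derivative_eq_intros)
  have "(f has_derivative frechet_derivative f (at x)) (at (x + 0 *\<^sub>R b))"
    using frechet_derivative_works[THEN iffD1, OF assms] by simp
  from has_derivative_compose[OF line this]
  have "((\<lambda>t. f (x + t *\<^sub>R b)) has_derivative (\<lambda>t. frechet_derivative f (at x) (t *\<^sub>R b))) (at 0)" .
  moreover have "(\<lambda>t. frechet_derivative f (at x) (t *\<^sub>R b)) = (*) (pd b f x)"
    using linear_frechet_derivative[OF assms] by (auto simp: pd_def linear_scale mult.commute)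
  ultimately show ?thesis
    by (simp add: has_field_derivative_def)
qed

lemma smooth_differentiable: "smooth f \<Longrightarrow> f differentiable (at x)"
  unfolding smooth_def using Ck.simps(2)[of 0 f] by blast

lemma poisson_differentiable: "poisson P \<Longrightarrow> (\<lambda>y. P y i j) differentiable (at x)"
  unfolding poisson_def bivector_field_def by (blast intro: smooth_differentiable)

lemma coord_add: "coord a (p + q) = coord a p + coord a q"
  by (cases a) auto

lemma jac_add_const: "jac (\<lambda>y. F y + c) = jac F"
  by (intro ext) (simp add: jac_def pdc_def pd_def coord_add frechet_derivative_add_const)

lemma jac_translate:
  assumes "\<And>y. F (y + d) = F y + c"
  shows "jac F (x + d) = jac F x"
proof -
  have "\<And>a y. coord a (F (y + d)) = coord a (F y) + coord a c"
    using assms by (simp add: coord_add)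
  then show ?thesis
    by (intro ext) (simp add: jac_def pdc_def pd_def frechet_derivative_translate)
qed

lemma push_has_real_derivative:
  assumes "\<And>i j. ((\<lambda>t. P t i j) has_real_derivative D i j) (at 0)"
  shows "((\<lambda>t. push F x (P t) a b) has_real_derivative push F x D a b) (at 0)"
  unfolding push_def by (intro DERIV_sum DERIV_cmult DERIV_cmult_right assms)

text \<open>
  The Jacobian of \<open>F\<close> is evaluated at the fixed point \<open>z\<close>, so \<open>F\<close> need not be differentiable.
\<close>
lemma pd_eq_push_pd:
  fixes Q :: "('m::finite, 'n::finite) bivf"
  assumes "f differentiable (at x)"
    and "\<And>i j. (\<lambda>y. Q y i j) differentiable (at y)"
    and "\<And>t. f (x + t *\<^sub>R e) = push F z (Q (y + t *\<^sub>R e)) a b + C"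
  shows "pd e f x = push F z (\<lambda>i j. pd e (\<lambda>y. Q y i j) y) a b"
proof (rule DERIV_unique)
  show "((\<lambda>t. f (x + t *\<^sub>R e)) has_real_derivative pd e f x) (at 0)"
    using assms(1) by (rule pd_has_real_derivative)
  have "((\<lambda>t. push F z (Q (y + t *\<^sub>R e)) a b + C) has_real_derivative
      push F z (\<lambda>i j. pd e (\<lambda>y. Q y i j) y) a b + 0) (at 0)"
    by (intro DERIV_add DERIV_const push_has_real_derivative pd_has_real_derivative assms(2))
  then show "((\<lambda>t. f (x + t *\<^sub>R e)) has_real_derivative
      push F z (\<lambda>i j. pd e (\<lambda>y. Q y i j) y) a b) (at 0)"
    by (simp add: assms(3))
qed

lemma gmult_add_right_H: "snd d = 0 \<Longrightarrow> gmult \<rho> g (g' + d) = gmult \<rho> g g' + d"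
  by (simp add: gmult_def prod_eq_iff add.assoc)

lemma gmult_add_left_V: "fst d = 0 \<Longrightarrow> gmult \<rho> (g + d) g' = gmult \<rho> g g' + d"
  by (simp add: gmult_def prod_eq_iff add.assoc)

lemma multiplicative_add_H:
  assumes "multiplicative \<rho> P" and "snd d = 0"
  shows "P (gmult \<rho> g g' + d) a b
    = push (gmult \<rho> g) g' (P (g' + d)) a b + push (\<lambda>y. gmult \<rho> y g') g (P g) a b"
proof -
  have "jac (gmult \<rho> g) (g' + d) = jac (gmult \<rho> g) g'"
    using assms(2) by (intro jac_translate[where c = d] gmult_add_right_H)
  moreover have "jac (\<lambda>y. gmult \<rho> y (g' + d)) = jac (\<lambda>y. gmult \<rho> y g')"
    using assms(2) by (simp add: gmult_add_right_H jac_add_const)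
  moreover have "P (gmult \<rho> g (g' + d)) a b
    = push (gmult \<rho> g) (g' + d) (P (g' + d)) a b + push (\<lambda>y. gmult \<rho> y (g' + d)) g (P g) a b"
    using assms(1) unfolding multiplicative_def by blast
  ultimately show ?thesis
    using assms(2) by (simp add: push_def gmult_add_right_H)
qed

lemma multiplicative_add_V:
  assumes "multiplicative \<rho> P" and "fst d = 0"
  shows "P (gmult \<rho> g g' + d) a b
    = push (gmult \<rho> g) g' (P g') a b + push (\<lambda>y. gmult \<rho> y g') g (P (g + d)) a b"
proof -
  have "jac (\<lambda>y. gmult \<rho> y g') (g + d) = jac (\<lambda>y. gmult \<rho> y g') g"
    using assms(2) by (intro jac_translate[where c = d] gmult_add_left_V)
  moreover have "gmult \<rho> (g + d) = (\<lambda>y. gmult \<rho> g y + d)"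
    using assms(2) by (simp add: gmult_add_left_V fun_eq_iff)
  then have "jac (gmult \<rho> (g + d)) = jac (gmult \<rho> g)"
    by (simp add: jac_add_const)
  moreover have "P (gmult \<rho> (g + d) g') a b
    = push (gmult \<rho> (g + d)) g' (P g') a b + push (\<lambda>y. gmult \<rho> y g') (g + d) (P (g + d)) a b"
    using assms(1) unfolding multiplicative_def by blast
  ultimately show ?thesis
    using assms(2) by (simp add: push_def gmult_add_left_V)
qed

lemma multiplicative_pdc_H_left_invariant:
  assumes "multiplicative \<rho> P" and "\<And>i j x. (\<lambda>y. P y i j) differentiable (at x)"
  shows "left_invariant \<rho> (\<lambda>x i j. pdc (Inl k) (\<lambda>y. P y i j) x)"
  unfolding left_invariant_def pdc_def
proof (intro allI)
  fix g g' a b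
  show "pd (cvec (Inl k)) (\<lambda>y. P y a b) (gmult \<rho> g g')
      = push (gmult \<rho> g) g' (\<lambda>i j. pd (cvec (Inl k)) (\<lambda>y. P y i j) g') a b"
    using assms
    by (intro pd_eq_push_pd[where C = "push (\<lambda>y. gmult \<rho> y g') g (P g) a b"]
        multiplicative_add_H) auto
qed

lemma multiplicative_pdc_V_right_invariant:
  assumes "multiplicative \<rho> P" and "\<And>i j x. (\<lambda>y. P y i j) differentiable (at x)"
  shows "right_invariant \<rho> (\<lambda>x i j. pdc (Inr l) (\<lambda>y. P y i j) x)"
  unfolding right_invariant_def pdc_def
proof (intro allI)
  fix g g' a b
  show "pd (cvec (Inr l)) (\<lambda>y. P y a b) (gmult \<rho> g g')
      = push (\<lambda>y. gmult \<rho> y g') g (\<lambda>i j. pd (cvec (Inr l)) (\<lambda>y. P y i j) g) a b"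
    using assms
    by (intro pd_eq_push_pd[where C = "push (gmult \<rho> g) g' (P g') a b"])
      (auto simp: multiplicative_add_V add.commute)
qed

theorem lemma3:
  fixes \<rho> :: "real^'m::finite \<Rightarrow> real^'n::finite^'n"
    and \<pi> :: "('m,'n) bivf"
  assumes "smooth_rep \<rho>"
    and "poisson \<pi>"
    and "multiplicative \<rho> \<pi>"
  shows "(\<forall>k. left_invariant \<rho> (\<lambda>x i j. pdc (Inl k) (\<lambda>y. \<pi> y i j) x))
       \<and> (\<forall>l. right_invariant \<rho> (\<lambda>x i j. pdc (Inr l) (\<lambda>y. \<pi> y i j) x))"
  using multiplicative_pdc_H_left_invariant multiplicative_pdc_V_right_invariant
    poisson_differentiable assms(2,3) by blast

end
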